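(* Among the exposure metrics $ED, ER, DTD, DTR, DID, DIR$, exactly $ED$, $DTD$ and $DID$ satisfy optimality of random rankings: for every population $\mathcal D$ with uniform relevance, if $r$ is drawn uniformly at random from the set of all rankings of the full population $\mathcal D$, then $\mathbb E[m(r)]=v_{\mathrm{opt}}(m)$. In particular $ER$, $DTR$ and $DIR$ do not satisfy this property.
   Context: A population is a finite set $\mathcal{D}$ of candidates partitioned into two nonempty groups, a non-protected group $G_0$ and a protected group $G_1$; each candidate $d$ has a relevance score $y(d)\in\mathbb R$; uniform relevance means $y(d)=1$ for all $d$. For a candidate set $D\subseteq\mathcal D$ with $n=|D|$, a ranking is a bijection $r:\{1,\dots,n\}\to D$ and $r^{-1}(d)$ is the position of $d$. Position bias $b(k)=1/\log_2(k+1)$. For $G\in\{G_0,G_1\}$: $\mathrm{Exposure}(G|r)=\frac{1}{|G|}\sum_{d\in G\cap D} b(r^{-1}(d))$, $Y(G)=\frac1{|G|}\sum_{d\in G}y(d)$, $CTR(G|r)=\frac1{|G|}\sum_{d\in G\cap D} b(r^{-1}(d))\,y(d)$. $ED(r)=\mathrm{Exposure}(G_1|r)-\mathrm{Exposure}(G_0|r)$, $ER(r)=\mathrm{Exposure}(G_1|r)/\mathrm{Exposure}(G_0|r)$, $DTD(r)=\frac{\mathrm{Exposure}(G_1|r)}{Y(G_1)}-\frac{\mathrm{Exposure}(G_0|r)}{Y(G_0)}$, $DTR(r)=\frac{\mathrm{Exposure}(G_1|r)}{\mathrm{Exposure}(G_0|r)}\cdot\frac{Y(G_0)}{Y(G_1)}$,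 $DID(r)=\frac{CTR(G_1|r)}{Y(G_1)}-\frac{CTR(G_0|r)}{Y(G_0)}$, $DIR(r)=\frac{CTR(G_1|r)}{CTR(G_0|r)}\cdot\frac{Y(G_0)}{Y(G_1)}$. Optimal values: $v_{\mathrm{opt}}=0$ for $ED,DTD,DID$ and $v_{\mathrm{opt}}=1$ for $ER,DTR,DIR$. *)

theory Defs
  imports "HOL-Library.FuncSet" Complex_Main
begin

type_synonym 'a ranking = "nat \<Rightarrow> 'a"

definition bias :: "nat \<Rightarrow> real" where
  "bias k = 1 / log 2 (real k + 1)"

definition rankings :: "'a set \<Rightarrow> 'a ranking set" where
  "rankings D = {r \<in> {1..card D} \<rightarrow>\<^sub>E D. bij_betw r {1..card D} D}"

definition pos :: "'a set \<Rightarrow> 'a ranking \<Rightarrow> 'a \<Rightarrow> nat" where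
  "pos D r d = inv_into {1..card D} r d"

definition exposure :: "'a set \<Rightarrow> 'a set \<Rightarrow> 'a ranking \<Rightarrow> real" where
  "exposure G D r = (\<Sum>d\<in>G \<inter> D. bias (pos D r d)) / real (card G)"

definition Yavg :: "'a set \<Rightarrow> ('a \<Rightarrow> real) \<Rightarrow> real" where
  "Yavg G y = (\<Sum>d\<in>G. y d) / real (card G)"

definition CTR :: "'a set \<Rightarrow> ('a \<Rightarrow> real) \<Rightarrow> 'a set \<Rightarrow> 'a ranking \<Rightarrow> real" where
  "CTR G y D r = (\<Sum>d\<in>G \<inter> D. bias (pos D r d) * y d) / real (card G)"

text \<open>A metric takes G0 (non-protected), G1 (protected), relevance y, candidate set D and ranking r.\<close>
type_synonym 'a metric = "'a set \<Rightarrow> 'a set \<Rightarrow> ('a \<Rightarrow> real) \<Rightarrow> 'a set \<Rightarrow> 'a ranking \<Rightarrow> real"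

definition ED :: "'a metric" where
  "ED G0 G1 y D r = exposure G1 D r - exposure G0 D r"
definition ER :: "'a metric" where
  "ER G0 G1 y D r = exposure G1 D r / exposure G0 D r"
definition DTD :: "'a metric" where
  "DTD G0 G1 y D r = exposure G1 D r / Yavg G1 y - exposure G0 D r / Yavg G0 y"
definition DTR :: "'a metric" where
  "DTR G0 G1 y D r = (exposure G1 D r / exposure G0 D r) * (Yavg G0 y / Yavg G1 y)"
definition DID :: "'a metric" where
  "DID G0 G1 y D r = CTR G1 y D r / Yavg G1 y - CTR G0 y D r / Yavg G0 y"
definition DIR :: "'a metric" where
  "DIR G0 G1 y D r = (CTR G1 y D r / CTR G0 y D r) * (Yavg G0 y / Yavg G1 y)"

definition optimal_random :: "'a metric \<Rightarrow> real \<Rightarrow> bool" where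
  "optimal_random m v \<longleftrightarrow>
     (\<forall>G0 G1 y. finite G0 \<and> finite G1 \<and> G0 \<noteq> {} \<and> G1 \<noteq> {} \<and> G0 \<inter> G1 = {} \<and>
        (\<forall>d \<in> G0 \<union> G1. y d = 1) \<longrightarrow>
        (\<Sum>r\<in>rankings (G0 \<union> G1). m G0 G1 y (G0 \<union> G1) r) / real (card (rankings (G0 \<union> G1))) = v)"

end

(* Composing a ranking with the transposition of two candidates a, b permutes the set of
   rankings and moves a to the old position of b, so every candidate has the same position
   distribution under a uniformly random ranking. Hence the expected exposure of any group is
   the same per-candidate average, and ED has expectation 0; under uniform relevance DTD and
   DID coincide with ED, and DTR and DIR with ER. For two singleton groups the two rankings
   give ER = b(2) and 1/b(2), whose mean exceeds 1 because b(2) differs from 1. *)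

theory Submission
  imports Defs "HOL-Combinatorics.Transposition"
begin

definition relabel :: "'a set \<Rightarrow> ('a \<Rightarrow> 'a) \<Rightarrow> 'a ranking \<Rightarrow> 'a ranking" where
  "relabel D \<sigma> r = restrict (\<sigma> \<circ> r) {1..card D}"

lemma rankings_bij_betw: "r \<in> rankings D \<Longrightarrow> bij_betw r {1..card D} D"
  by (simp add: rankings_def)

lemma rankings_pos:
  assumes "r \<in> rankings D" "d \<in> D"
  shows "pos D r d \<in> {1..card D}" "r (pos D r d) = d"
proof -
  have "d \<in> r ` {1..card D}"
    using assms rankings_bij_betw by (auto simp: bij_betw_def)
  then show "pos D r d \<in> {1..card D}" "r (pos D r d) = d"
    unfolding pos_def by (simp_all only: inv_into_into f_inv_into_f)
qed

lemma relabel_in_rankings: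
  assumes "bij_betw \<sigma> D D" "r \<in> rankings D"
  shows "relabel D \<sigma> r \<in> rankings D"
proof -
  have "bij_betw (\<sigma> \<circ> r) {1..card D} D"
    using bij_betw_trans[OF rankings_bij_betw[OF assms(2)] assms(1)] .
  then show ?thesis
    by (auto simp: relabel_def rankings_def dest: bij_betwE)
qed

lemma relabel_relabel:
  assumes "r \<in> rankings D" "\<forall>x\<in>D. \<tau> (\<sigma> x) = x"
  shows "relabel D \<tau> (relabel D \<sigma> r) = r"
proof -
  have "r \<in> {1..card D} \<rightarrow>\<^sub>E D"
    using assms(1) by (simp add: rankings_def)
  then show ?thesis
    using assms(2) by (auto simp: relabel_def fun_eq_iff PiE_iff extensional_def)
qed

lemma bij_betw_relabel:
  assumes "bij_betw \<sigma> D D"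
  shows "bij_betw (relabel D \<sigma>) (rankings D) (rankings D)"
proof (rule bij_betw_byWitness[where f' = "relabel D (inv_into D \<sigma>)"])
  have inv: "bij_betw (inv_into D \<sigma>) D D"
    using assms by (rule bij_betw_inv_into)
  show "\<forall>r\<in>rankings D. relabel D (inv_into D \<sigma>) (relabel D \<sigma> r) = r"
    using assms by (auto intro: relabel_relabel bij_betw_inv_into_left)
  show "\<forall>r\<in>rankings D. relabel D \<sigma> (relabel D (inv_into D \<sigma>) r) = r"
    using assms by (auto intro: relabel_relabel bij_betw_inv_into_right)
  show "relabel D \<sigma> ` rankings D \<subseteq> rankings D"
    using assms by (auto intro: relabel_in_rankings)
  show "relabel D (inv_into D \<sigma>) ` rankings D \<subseteq> rankings D"
    using inv by (auto intro: relabel_in_rankings)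
qed

lemma pos_relabel:
  assumes "bij_betw \<sigma> D D" "r \<in> rankings D" "d \<in> D"
  shows "pos D (relabel D \<sigma> r) (\<sigma> d) = pos D r d"
proof -
  have "bij_betw (relabel D \<sigma> r) {1..card D} D"
    using relabel_in_rankings[OF assms(1,2)] by (rule rankings_bij_betw)
  then show ?thesis
    unfolding pos_def[of D "relabel D \<sigma> r"]
    using rankings_pos[OF assms(2,3)]
    by (intro inv_into_f_eq) (auto simp: bij_betw_def relabel_def pos_def)
qed

lemma sum_rankings_pos_eq:
  assumes "a \<in> D" "b \<in> D"
  shows "(\<Sum>r\<in>rankings D. f (pos D r a)) = (\<Sum>r\<in>rankings D. f (pos D r b))"
proof -
  let ?\<sigma> = "transpose a b"
  have \<sigma>: "bij_betw ?\<sigma> D D"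
    using assms by simp
  have "(\<Sum>r\<in>rankings D. f (pos D r a)) = (\<Sum>r\<in>rankings D. f (pos D (relabel D ?\<sigma> r) b))"
    using pos_relabel[OF \<sigma> _ assms(1)] by simp
  also have "\<dots> = (\<Sum>r\<in>rankings D. f (pos D r b))"
    using bij_betw_relabel[OF \<sigma>] by (rule sum.reindex_bij_betw)
  finally show ?thesis .
qed

lemma sum_rankings_exposure:
  assumes "finite G" "G \<noteq> {}" "G \<subseteq> D" "d \<in> D"
  shows "(\<Sum>r\<in>rankings D. exposure G D r) = (\<Sum>r\<in>rankings D. bias (pos D r d))"
proof -
  have "(\<Sum>r\<in>rankings D. exposure G D r)
      = (\<Sum>e\<in>G. \<Sum>r\<in>rankings D. bias (pos D r e)) / real (card G)"
    using assms(3)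
    by (simp add: exposure_def sum_divide_distrib[symmetric] Int_absorb2 sum.swap[of _ G])
  also have "\<dots> = (\<Sum>e\<in>G. \<Sum>r\<in>rankings D. bias (pos D r d)) / real (card G)"
    using assms(3,4) by (intro arg_cong2[where f = "(/)"] sum.cong refl sum_rankings_pos_eq) auto
  also have "\<dots> = (\<Sum>r\<in>rankings D. bias (pos D r d))"
    using assms(1,2) by simp
  finally show ?thesis .
qed

definition uniform_population :: "'a set \<Rightarrow> 'a set \<Rightarrow> ('a \<Rightarrow> real) \<Rightarrow> bool" where
  "uniform_population G0 G1 y \<longleftrightarrow> finite G0 \<and> finite G1 \<and> G0 \<noteq> {} \<and> G1 \<noteq> {} \<and>
     G0 \<inter> G1 = {} \<and> (\<forall>d \<in> G0 \<union> G1. y d = 1)"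

definition expected_metric :: "'a metric \<Rightarrow> 'a set \<Rightarrow> 'a set \<Rightarrow> ('a \<Rightarrow> real) \<Rightarrow> real" where
  "expected_metric m G0 G1 y =
     (\<Sum>r\<in>rankings (G0 \<union> G1). m G0 G1 y (G0 \<union> G1) r) / real (card (rankings (G0 \<union> G1)))"

lemma optimal_random_iff:
  "optimal_random m v \<longleftrightarrow> (\<forall>G0 G1 y. uniform_population G0 G1 y \<longrightarrow> expected_metric m G0 G1 y = v)"
  by (simp add: optimal_random_def uniform_population_def expected_metric_def)

lemma optimal_random_cong:
  assumes "\<And>G0 G1 y r. uniform_population G0 G1 y \<Longrightarrow> r \<in> rankings (G0 \<union> G1) \<Longrightarrow>
             m G0 G1 y (G0 \<union> G1) r = m' G0 G1 y (G0 \<union> G1) r"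
  shows "optimal_random m v \<longleftrightarrow> optimal_random m' v"
proof -
  have "expected_metric m G0 G1 y = expected_metric m' G0 G1 y"
    if "uniform_population G0 G1 y" for G0 G1 y
    using assms[OF that] by (simp add: expected_metric_def)
  then show ?thesis
    by (simp add: optimal_random_iff)
qed

lemma optimal_random_ED: "optimal_random ED 0"
proof (unfold optimal_random_iff, intro allI impI)
  fix G0 G1 :: "'a set" and y
  assume "uniform_population G0 G1 y"
  then have G: "finite G0" "finite G1" "G0 \<noteq> {}" "G1 \<noteq> {}"
    by (simp_all add: uniform_population_def)
  then obtain d where d: "d \<in> G0 \<union> G1"
    by blast
  have "(\<Sum>r\<in>rankings (G0 \<union> G1). ED G0 G1 y (G0 \<union> G1) r) = 0"
    using sum_rankings_exposure[OF _ _ _ d, of G0] sum_rankings_exposure[OF _ _ _ d, of G1] G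
    by (simp add: ED_def sum_subtractf)
  then show "expected_metric ED G0 G1 y = 0"
    by (simp add: expected_metric_def)
qed

lemma Yavg_uniform: "finite G \<Longrightarrow> G \<noteq> {} \<Longrightarrow> \<forall>d\<in>G. y d = 1 \<Longrightarrow> Yavg G y = 1"
  by (simp add: Yavg_def)

lemma CTR_uniform: "\<forall>d\<in>G \<inter> D. y d = 1 \<Longrightarrow> CTR G y D r = exposure G D r"
  by (simp add: CTR_def exposure_def)

lemma optimal_random_DTD_iff_ED:
  "optimal_random (DTD :: 'a metric) v \<longleftrightarrow> optimal_random (ED :: 'a metric) v"
  by (rule optimal_random_cong) (simp add: uniform_population_def DTD_def ED_def Yavg_uniform)

lemma optimal_random_DID_iff_ED:
  "optimal_random (DID :: 'a metric) v \<longleftrightarrow> optimal_random (ED :: 'a metric) v"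
  by (rule optimal_random_cong)
    (simp add: uniform_population_def DID_def ED_def Yavg_uniform CTR_uniform)

lemma optimal_random_DTR_iff_ER:
  "optimal_random (DTR :: 'a metric) v \<longleftrightarrow> optimal_random (ER :: 'a metric) v"
  by (rule optimal_random_cong) (simp add: uniform_population_def DTR_def ER_def Yavg_uniform)

lemma optimal_random_DIR_iff_ER:
  "optimal_random (DIR :: 'a metric) v \<longleftrightarrow> optimal_random (ER :: 'a metric) v"
  by (rule optimal_random_cong)
    (simp add: uniform_population_def DIR_def ER_def Yavg_uniform CTR_uniform)

definition pair_ranking :: "'a \<Rightarrow> 'a \<Rightarrow> 'a ranking" where
  "pair_ranking a b = (\<lambda>k\<in>{1..2}. if k = 1 then a else b)"

lemma pair_ranking_neq:
  assumes "a \<noteq> b"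
  shows "pair_ranking a b \<noteq> pair_ranking b a"
proof -
  have "pair_ranking a b 1 = a" "pair_ranking b a 1 = b"
    by (simp_all add: pair_ranking_def)
  then show ?thesis
    using assms by metis
qed

lemma rankings_doubleton:
  assumes "a \<noteq> b"
  shows "rankings {a, b} = {pair_ranking a b, pair_ranking b a}"
proof -
  have card: "card {a, b} = 2" and two: "{1..2::nat} = {1, 2}"
    using assms by auto
  have "r \<in> rankings {a, b} \<longleftrightarrow> r = pair_ranking a b \<or> r = pair_ranking b a" for r
  proof
    assume "r \<in> rankings {a, b}"
    then have r: "r \<in> {1, 2} \<rightarrow>\<^sub>E {a, b}" "inj_on r {1, 2}"
      unfolding rankings_def card two by (auto simp: bij_betw_def)
    moreover have "r 1 \<in> {a, b}" "r 2 \<in> {a, b}"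
      using r(1) by auto
    ultimately have "r 1 = a \<and> r 2 = b \<or> r 1 = b \<and> r 2 = a"
      by (auto simp: inj_on_def)
    moreover have "r k = undefined" if "k \<notin> {1, 2}" for k
      using r(1) that by (auto simp: PiE_iff extensional_def)
    ultimately show "r = pair_ranking a b \<or> r = pair_ranking b a"
      unfolding pair_ranking_def two by (auto simp: fun_eq_iff)
  next
    have "pair_ranking c d \<in> rankings {a, b}" if "{c, d} = {a, b}" "c \<noteq> d" for c d
    proof -
      have "bij_betw (pair_ranking c d) {1, 2} {c, d}"
        using that(2) by (auto simp: pair_ranking_def bij_betw_def inj_on_def)
      moreover have "pair_ranking c d \<in> {1, 2} \<rightarrow>\<^sub>E {c, d}"
        unfolding pair_ranking_def two by auto
      ultimately show ?thesis
        unfolding rankings_def card two that(1) by simp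
    qed
    moreover assume "r = pair_ranking a b \<or> r = pair_ranking b a"
    ultimately show "r \<in> rankings {a, b}"
      using assms by (auto simp: insert_commute)
  qed
  then show ?thesis
    by blast
qed

lemma pos_pair_ranking:
  assumes "a \<noteq> b"
  shows "pos {a, b} (pair_ranking a b) a = 1" "pos {a, b} (pair_ranking a b) b = 2"
proof -
  have inj: "inj_on (pair_ranking a b) {1..card {a, b}}"
    using assms by (auto simp: pair_ranking_def inj_on_def)
  show "pos {a, b} (pair_ranking a b) a = 1" "pos {a, b} (pair_ranking a b) b = 2"
    unfolding pos_def using inj assms by (auto intro!: inv_into_f_eq simp: pair_ranking_def)
qed

lemma expected_metric_doubleton:
  assumes "a \<noteq> b"
  shows "expected_metric m {a} {b} y =
    (m {a} {b} y {a, b} (pair_ranking a b) + m {a} {b} y {a, b} (pair_ranking b a)) / 2"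
  using assms by (simp add: expected_metric_def insert_commute rankings_doubleton pair_ranking_neq)

lemma ER_pair_ranking:
  assumes "a \<noteq> b"
  shows "ER {a} {b} y {a, b} (pair_ranking a b) = bias 2"
    "ER {a} {b} y {a, b} (pair_ranking b a) = 1 / bias 2"
  using assms pos_pair_ranking[OF assms] pos_pair_ranking[OF assms[symmetric]]
  by (simp_all add: ER_def exposure_def insert_commute bias_def)

lemma bias_2_bounds: "0 < bias 2" "bias 2 < 1"
proof -
  have "1 < log 2 (3::real)"
    using less_log_iff[of 2 3 1] by simp
  then show "0 < bias 2" "bias 2 < 1"
    by (simp_all add: bias_def)
qed

lemma mean_inverse_eq_1_iff:
  fixes x :: real
  assumes "0 < x"
  shows "(x + 1 / x) / 2 = 1 \<longleftrightarrow> x = 1"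
proof -
  have "(x + 1 / x) / 2 = 1 \<longleftrightarrow> (x - 1)\<^sup>2 = 0"
    using assms by (auto simp: field_simps power2_eq_square)
  then show ?thesis
    by simp
qed

lemma not_optimal_random_ER:
  fixes a b :: 'a
  assumes "a \<noteq> b"
  shows "\<not> optimal_random (ER :: 'a metric) 1"
proof
  assume "optimal_random (ER :: 'a metric) 1"
  moreover have "uniform_population {a} {b} (\<lambda>_. 1)"
    using assms by (simp add: uniform_population_def)
  ultimately have "expected_metric ER {a} {b} (\<lambda>_. 1) = 1"
    unfolding optimal_random_iff by blast
  then have "(bias 2 + 1 / bias 2) / 2 = 1"
    using assms by (simp add: expected_metric_doubleton ER_pair_ranking)
  then show False
    using bias_2_bounds mean_inverse_eq_1_iff by fastforce
qed

theorem theorem7: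
  shows "optimal_random (ED :: 'a metric) 0 \<and> optimal_random (DTD :: 'a metric) 0 \<and>
         optimal_random (DID :: 'a metric) 0 \<and>
         \<not> optimal_random (ER :: nat metric) 1 \<and> \<not> optimal_random (DTR :: nat metric) 1 \<and>
         \<not> optimal_random (DIR :: nat metric) 1"
  using optimal_random_ED not_optimal_random_ER[of "0 :: nat" 1]
  by (simp add: optimal_random_DTD_iff_ED optimal_random_DID_iff_ED
      optimal_random_DTR_iff_ER optimal_random_DIR_iff_ER)

end
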